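(* Let $\mathcal A$ be an abelian category. (1) The following are equivalent: (i) $\mathcal A$ is spectral; (ii) $\mathcal A$ has enough injectives and $N$ is $M$-$F$-split for all objects $M,N$ of $\mathcal A$ and every fully invariant subobject $F$ of $N$; (iii) $\mathcal A$ has enough injectives and every object $N$ is self-$F$-split for every fully invariant subobject $F$ of $N$; (iv) $\mathcal A$ has enough injectives and $N$ is $M$-$F$-split for all objects $M,N$ with $N$ injective and every fully invariant subobject $F$ of $N$; (v) $\mathcal A$ has enough injectives and every injective object $N$ is self-$F$-split for every fully invariant subobject $F$ of $N$. (2) The following are equivalent: (i) $\mathcal A$ is spectral; (ii) $\mathcal A$ has enough projectives and $N$ is dual $M$-$F$-split for all objects $M,N$ and every fully invariant subobject $F$ of $N$; (iii) $\mathcal A$ has enough projectives and every object $N$ is dual self-$F$-split for every fully invariant subobject $F$ of $N$; (iv) $\mathcal A$ has enough projectives and $N$ is dual $M$-$F$-split for all objects $M,N$ with $M$ projective and every fully invariant subobject $F$ of $N$; (v) $\mathcal A$ has enough projectives and every projective object $N$ is dual self-$F$-split for every fully invariant subobject $F$ of $N$.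
   Context: An abelian category is spectral if every short exact sequence in it splits. A morphism $s:X\to Y$ is a section if $ts=1_X$ for some $t$, a retraction if $st=1_Y$ for some $t$. A subobject $F$ of $N$ with inclusion $i:F\to N$ is fully invariant if for every morphism $h:N\to N$ there is $\alpha:F\to F$ with $hi=i\alpha$. For objects $M,N$ and a fully invariant subobject $F$ of $N$ with cokernel $d:N\to N/F$: $N$ is $M$-$F$-split if for every morphism $g:M\to N$, $\ker(dg)$ is a section; $N$ is dual $M$-$F$-split if for every morphism $g:N\to M$, $\mathrm{coker}(gi)$ is a retraction. Self-$F$-split means $N$-$F$-split (and similarly for the dual notion). *)

theory Defs
  imports Main
begin

record ('o,'m) cat =
  Ob   :: "'o set"
  Ar   :: "'m set"
  Dom  :: "'m \<Rightarrow> 'o"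
  Cod  :: "'m \<Rightarrow> 'o"
  Id   :: "'o \<Rightarrow> 'm"
  Comp :: "'m \<Rightarrow> 'm \<Rightarrow> 'm"   (* Comp C g f = g \<circ> f *)

definition hom :: "('o,'m) cat \<Rightarrow> 'o \<Rightarrow> 'o \<Rightarrow> 'm set" where
  "hom C X Y = {f \<in> Ar C. Dom C f = X \<and> Cod C f = Y}"

definition category :: "('o,'m) cat \<Rightarrow> bool" where
  "category C \<longleftrightarrow>
     (\<forall>f\<in>Ar C. Dom C f \<in> Ob C \<and> Cod C f \<in> Ob C) \<and>
     (\<forall>X\<in>Ob C. Id C X \<in> hom C X X) \<and>
     (\<forall>f\<in>Ar C. \<forall>g\<in>Ar C. Cod C f = Dom C g \<longrightarrow> Comp C g f \<in> hom C (Dom C f) (Cod C g)) \<and>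
     (\<forall>f\<in>Ar C. Comp C f (Id C (Dom C f)) = f \<and> Comp C (Id C (Cod C f)) f = f) \<and>
     (\<forall>f\<in>Ar C. \<forall>g\<in>Ar C. \<forall>h\<in>Ar C. Cod C f = Dom C g \<longrightarrow> Cod C g = Dom C h \<longrightarrow>
        Comp C h (Comp C g f) = Comp C (Comp C h g) f)"

definition mono :: "('o,'m) cat \<Rightarrow> 'm \<Rightarrow> bool" where
  "mono C f \<longleftrightarrow> f \<in> Ar C \<and>
     (\<forall>g\<in>Ar C. \<forall>h\<in>Ar C. Cod C g = Dom C f \<longrightarrow> Cod C h = Dom C f \<longrightarrow> Dom C g = Dom C h \<longrightarrow>
        Comp C f g = Comp C f h \<longrightarrow> g = h)"

definition epi :: "('o,'m) cat \<Rightarrow> 'm \<Rightarrow> bool" where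
  "epi C f \<longleftrightarrow> f \<in> Ar C \<and>
     (\<forall>g\<in>Ar C. \<forall>h\<in>Ar C. Dom C g = Cod C f \<longrightarrow> Dom C h = Cod C f \<longrightarrow> Cod C g = Cod C h \<longrightarrow>
        Comp C g f = Comp C h f \<longrightarrow> g = h)"

definition section_mor :: "('o,'m) cat \<Rightarrow> 'm \<Rightarrow> bool" where
  "section_mor C s \<longleftrightarrow> s \<in> Ar C \<and>
     (\<exists>t\<in>hom C (Cod C s) (Dom C s). Comp C t s = Id C (Dom C s))"

definition retraction_mor :: "('o,'m) cat \<Rightarrow> 'm \<Rightarrow> bool" where
  "retraction_mor C s \<longleftrightarrow> s \<in> Ar C \<and>
     (\<exists>t\<in>hom C (Cod C s) (Dom C s). Comp C s t = Id C (Cod C s))"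

definition zero_object :: "('o,'m) cat \<Rightarrow> 'o \<Rightarrow> bool" where
  "zero_object C Z \<longleftrightarrow> Z \<in> Ob C \<and>
     (\<forall>X\<in>Ob C. (\<exists>!f. f \<in> hom C X Z) \<and> (\<exists>!f. f \<in> hom C Z X))"

definition zero_mor :: "('o,'m) cat \<Rightarrow> 'm \<Rightarrow> bool" where
  "zero_mor C f \<longleftrightarrow> f \<in> Ar C \<and>
     (\<exists>Z. zero_object C Z \<and> (\<exists>a\<in>hom C (Dom C f) Z. \<exists>b\<in>hom C Z (Cod C f). f = Comp C b a))"

definition is_kernel :: "('o,'m) cat \<Rightarrow> 'm \<Rightarrow> 'm \<Rightarrow> bool" where
  "is_kernel C f k \<longleftrightarrow> f \<in> Ar C \<and> k \<in> Ar C \<and> Cod C k = Dom C f \<and> zero_mor C (Comp C f k) \<and>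
     (\<forall>k'\<in>Ar C. Cod C k' = Dom C f \<longrightarrow> zero_mor C (Comp C f k') \<longrightarrow>
        (\<exists>!u. u \<in> hom C (Dom C k') (Dom C k) \<and> Comp C k u = k'))"

definition is_cokernel :: "('o,'m) cat \<Rightarrow> 'm \<Rightarrow> 'm \<Rightarrow> bool" where
  "is_cokernel C f d \<longleftrightarrow> f \<in> Ar C \<and> d \<in> Ar C \<and> Dom C d = Cod C f \<and> zero_mor C (Comp C d f) \<and>
     (\<forall>d'\<in>Ar C. Dom C d' = Cod C f \<longrightarrow> zero_mor C (Comp C d' f) \<longrightarrow>
        (\<exists>!u. u \<in> hom C (Cod C d) (Cod C d') \<and> Comp C u d = d'))"

definition is_product :: "('o,'m) cat \<Rightarrow> 'o \<Rightarrow> 'o \<Rightarrow> 'o \<Rightarrow> 'm \<Rightarrow> 'm \<Rightarrow> bool" where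
  "is_product C A B P p1 p2 \<longleftrightarrow> p1 \<in> hom C P A \<and> p2 \<in> hom C P B \<and>
     (\<forall>X\<in>Ob C. \<forall>f\<in>hom C X A. \<forall>g\<in>hom C X B.
        \<exists>!u. u \<in> hom C X P \<and> Comp C p1 u = f \<and> Comp C p2 u = g)"

definition preadditive ::
  "('o,'m) cat \<Rightarrow> ('m \<Rightarrow> 'm \<Rightarrow> 'm) \<Rightarrow> ('o \<Rightarrow> 'o \<Rightarrow> 'm) \<Rightarrow> bool" where
  "preadditive C add zr \<longleftrightarrow> category C \<and>
     (\<forall>X\<in>Ob C. \<forall>Y\<in>Ob C. zr X Y \<in> hom C X Y \<and>
        (\<forall>f\<in>hom C X Y. \<forall>g\<in>hom C X Y. add f g \<in> hom C X Y \<and> add f g = add g f) \<and>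
        (\<forall>f\<in>hom C X Y. \<forall>g\<in>hom C X Y. \<forall>h\<in>hom C X Y. add (add f g) h = add f (add g h)) \<and>
        (\<forall>f\<in>hom C X Y. add f (zr X Y) = f \<and> (\<exists>g\<in>hom C X Y. add f g = zr X Y))) \<and>
     (\<forall>X\<in>Ob C. \<forall>Y\<in>Ob C. \<forall>Z\<in>Ob C. \<forall>f\<in>hom C X Y. \<forall>g\<in>hom C Y Z. \<forall>h\<in>hom C Y Z.
        Comp C (add g h) f = add (Comp C g f) (Comp C h f)) \<and>
     (\<forall>X\<in>Ob C. \<forall>Y\<in>Ob C. \<forall>Z\<in>Ob C. \<forall>f\<in>hom C X Y. \<forall>g\<in>hom C X Y. \<forall>h\<in>hom C Y Z.
        Comp C h (add f g) = add (Comp C h f) (Comp C h g))"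

definition abelian :: "('o,'m) cat \<Rightarrow> bool" where
  "abelian C \<longleftrightarrow> (\<exists>add zr. preadditive C add zr) \<and>
     (\<exists>Z. zero_object C Z) \<and>
     (\<forall>A\<in>Ob C. \<forall>B\<in>Ob C. \<exists>P p1 p2. is_product C A B P p1 p2) \<and>
     (\<forall>f\<in>Ar C. (\<exists>k. is_kernel C f k) \<and> (\<exists>d. is_cokernel C f d)) \<and>
     (\<forall>m. mono C m \<longrightarrow> (\<exists>f. is_kernel C f m)) \<and>
     (\<forall>e. epi C e \<longrightarrow> (\<exists>f. is_cokernel C f e))"

definition short_exact :: "('o,'m) cat \<Rightarrow> 'm \<Rightarrow> 'm \<Rightarrow> bool" where
  "short_exact C f g \<longleftrightarrow> mono C f \<and> epi C g \<and> Cod C f = Dom C g \<and> is_kernel C g f"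

definition spectral :: "('o,'m) cat \<Rightarrow> bool" where
  "spectral C \<longleftrightarrow> (\<forall>f g. short_exact C f g \<longrightarrow> section_mor C f)"

definition injective_obj :: "('o,'m) cat \<Rightarrow> 'o \<Rightarrow> bool" where
  "injective_obj C I \<longleftrightarrow> I \<in> Ob C \<and>
     (\<forall>m f. mono C m \<longrightarrow> f \<in> hom C (Dom C m) I \<longrightarrow> (\<exists>h\<in>hom C (Cod C m) I. Comp C h m = f))"

definition projective_obj :: "('o,'m) cat \<Rightarrow> 'o \<Rightarrow> bool" where
  "projective_obj C P \<longleftrightarrow> P \<in> Ob C \<and>
     (\<forall>e f. epi C e \<longrightarrow> f \<in> hom C P (Cod C e) \<longrightarrow> (\<exists>h\<in>hom C P (Dom C e). Comp C e h = f))"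

definition enough_injectives :: "('o,'m) cat \<Rightarrow> bool" where
  "enough_injectives C \<longleftrightarrow> (\<forall>X\<in>Ob C. \<exists>I m. injective_obj C I \<and> mono C m \<and> m \<in> hom C X I)"

definition enough_projectives :: "('o,'m) cat \<Rightarrow> bool" where
  "enough_projectives C \<longleftrightarrow> (\<forall>X\<in>Ob C. \<exists>P e. projective_obj C P \<and> epi C e \<and> e \<in> hom C P X)"

text \<open>A subobject F of N is represented by its inclusion, a mono i with codomain N.\<close>

definition fully_invariant :: "('o,'m) cat \<Rightarrow> 'o \<Rightarrow> 'm \<Rightarrow> bool" where
  "fully_invariant C N i \<longleftrightarrow> mono C i \<and> Cod C i = N \<and>
     (\<forall>h\<in>hom C N N. \<exists>\<alpha>\<in>hom C (Dom C i) (Dom C i). Comp C h i = Comp C i \<alpha>)"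

definition MF_split :: "('o,'m) cat \<Rightarrow> 'o \<Rightarrow> 'o \<Rightarrow> 'm \<Rightarrow> bool" where
  "MF_split C M N i \<longleftrightarrow>
     (\<forall>g\<in>hom C M N. \<forall>d. is_cokernel C i d \<longrightarrow>
        (\<forall>k. is_kernel C (Comp C d g) k \<longrightarrow> section_mor C k))"

definition dual_MF_split :: "('o,'m) cat \<Rightarrow> 'o \<Rightarrow> 'o \<Rightarrow> 'm \<Rightarrow> bool" where
  "dual_MF_split C M N i \<longleftrightarrow>
     (\<forall>g\<in>hom C N M. \<forall>c. is_cokernel C (Comp C g i) c \<longrightarrow> retraction_mor C c)"

end

(* In a spectral category every mono and every epi splits, so all objects are injective and
   projective and every kernel (cokernel) is a section (retraction); this gives all the splitting
   conditions. Conversely it suffices that every object X is injective (dually: projective).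
   Write X = ker f for some f : E -> Q with E injective and embed Q into an injective E' by v.
   Since v is mono, the endomorphism (x, y) |-> (0, v (f x)) of the injective object E x E' has
   kernel ker f x E'. Self-F-splitness for the fully invariant subobject F = 0 says that this
   kernel is a direct summand, so X is a retract of E x E' and hence injective. The dual argument
   uses F = N, for which the dual condition says that cokernels of endomorphisms split. *)

theory Submission
  imports Defs
begin

definition retract_of :: "('o,'m) cat \<Rightarrow> 'o \<Rightarrow> 'o \<Rightarrow> bool" where
  "retract_of C X Y \<longleftrightarrow> (\<exists>s\<in>hom C X Y. \<exists>r\<in>hom C Y X. Comp C r s = Id C X)"

locale abelian_category =
  fixes C :: "('o,'m) cat" and add :: "'m \<Rightarrow> 'm \<Rightarrow> 'm" and zr :: "'o \<Rightarrow> 'o \<Rightarrow> 'm"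
  assumes preadditive: "preadditive C add zr" and abelian: "abelian C"
begin

lemma category: "category C"
  using preadditive unfolding preadditive_def by blast

lemma Dom_in_Ob [simp]: "f \<in> Ar C \<Longrightarrow> Dom C f \<in> Ob C"
  and Cod_in_Ob [simp]: "f \<in> Ar C \<Longrightarrow> Cod C f \<in> Ob C"
  using category unfolding category_def by blast+

lemma Comp_simps [simp]:
  assumes "f \<in> Ar C" "g \<in> Ar C" "Cod C f = Dom C g"
  shows "Comp C g f \<in> Ar C" "Dom C (Comp C g f) = Dom C f" "Cod C (Comp C g f) = Cod C g"
  using category assms unfolding category_def hom_def by blast+

lemma Id_simps [simp]:
  assumes "X \<in> Ob C"
  shows "Id C X \<in> Ar C" "Dom C (Id C X) = X" "Cod C (Id C X) = X"
  using category assms unfolding category_def hom_def by blast+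

lemma comp_Id [simp]: "f \<in> Ar C \<Longrightarrow> Dom C f = X \<Longrightarrow> Comp C f (Id C X) = f"
  and Id_comp [simp]: "f \<in> Ar C \<Longrightarrow> Cod C f = Y \<Longrightarrow> Comp C (Id C Y) f = f"
  using category unfolding category_def by blast+

lemma comp_assoc:
  assumes "f \<in> Ar C" "g \<in> Ar C" "h \<in> Ar C" "Cod C f = Dom C g" "Cod C g = Dom C h"
  shows "Comp C (Comp C h g) f = Comp C h (Comp C g f)"
  using category assms unfolding category_def by metis

lemma zr_simps [simp]:
  assumes "X \<in> Ob C" "Y \<in> Ob C"
  shows "zr X Y \<in> Ar C" "Dom C (zr X Y) = X" "Cod C (zr X Y) = Y"
  using preadditive assms unfolding preadditive_def hom_def by blast+

lemma preadditive_hom: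
  assumes "X \<in> Ob C" "Y \<in> Ob C" "f \<in> hom C X Y" "g \<in> hom C X Y"
  shows "add f g \<in> hom C X Y" "add f g = add g f"
    "h \<in> hom C X Y \<Longrightarrow> add (add f g) h = add f (add g h)"
    "add f (zr X Y) = f" "\<exists>n\<in>hom C X Y. add f n = zr X Y"
  using preadditive assms unfolding preadditive_def by blast+

lemma preadditive_bilinear:
  assumes "X \<in> Ob C" "Y \<in> Ob C" "Z \<in> Ob C"
  shows "f \<in> hom C X Y \<Longrightarrow> g \<in> hom C Y Z \<Longrightarrow> h \<in> hom C Y Z \<Longrightarrow>
      Comp C (add g h) f = add (Comp C g f) (Comp C h f)"
    "f \<in> hom C X Y \<Longrightarrow> g \<in> hom C X Y \<Longrightarrow> h \<in> hom C Y Z \<Longrightarrow>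
      Comp C h (add f g) = add (Comp C h f) (Comp C h g)"
  using preadditive assms unfolding preadditive_def by blast+

lemma add_simps [simp]:
  assumes "f \<in> Ar C" "g \<in> Ar C" "Dom C g = Dom C f" "Cod C g = Cod C f"
  shows "add f g \<in> Ar C" "Dom C (add f g) = Dom C f" "Cod C (add f g) = Cod C f"
  using preadditive_hom(1)[of "Dom C f" "Cod C f" f g] assms by (auto simp: hom_def)

lemma add_commute:
  "f \<in> Ar C \<Longrightarrow> g \<in> Ar C \<Longrightarrow> Dom C g = Dom C f \<Longrightarrow> Cod C g = Cod C f \<Longrightarrow> add f g = add g f"
  using preadditive_hom(2)[of "Dom C f" "Cod C f" f g] by (auto simp: hom_def)

lemma add_assoc:
  "f \<in> Ar C \<Longrightarrow> g \<in> Ar C \<Longrightarrow> h \<in> Ar C \<Longrightarrow> Dom C g = Dom C f \<Longrightarrow> Cod C g = Cod C f \<Longrightarrow>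
   Dom C h = Dom C f \<Longrightarrow> Cod C h = Cod C f \<Longrightarrow> add (add f g) h = add f (add g h)"
  using preadditive_hom(3)[of "Dom C f" "Cod C f" f g h] by (auto simp: hom_def)

lemma add_zr [simp]: "f \<in> Ar C \<Longrightarrow> Dom C f = X \<Longrightarrow> Cod C f = Y \<Longrightarrow> add f (zr X Y) = f"
  using preadditive_hom(4)[of X Y f f] by (auto simp: hom_def)

lemma zr_add [simp]: "f \<in> Ar C \<Longrightarrow> Dom C f = X \<Longrightarrow> Cod C f = Y \<Longrightarrow> add (zr X Y) f = f"
  by (metis add_commute add_zr zr_simps Dom_in_Ob Cod_in_Ob)

lemma add_inverse_exists:
  assumes "f \<in> Ar C"
  obtains g where "g \<in> Ar C" "Dom C g = Dom C f" "Cod C g = Cod C f"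
    "add f g = zr (Dom C f) (Cod C f)"
  using preadditive_hom(5)[of "Dom C f" "Cod C f" f f] assms by (auto simp: hom_def)

lemma comp_add_left:
  "f \<in> Ar C \<Longrightarrow> g \<in> Ar C \<Longrightarrow> h \<in> Ar C \<Longrightarrow> Dom C h = Dom C g \<Longrightarrow> Cod C h = Cod C g \<Longrightarrow>
   Cod C f = Dom C g \<Longrightarrow> Comp C (add g h) f = add (Comp C g f) (Comp C h f)"
  using preadditive_bilinear(1)[of "Dom C f" "Cod C f" "Cod C g" f g h] by (auto simp: hom_def)

lemma comp_add_right:
  "f \<in> Ar C \<Longrightarrow> g \<in> Ar C \<Longrightarrow> h \<in> Ar C \<Longrightarrow> Dom C g = Dom C f \<Longrightarrow> Cod C g = Cod C f \<Longrightarrow>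
   Cod C f = Dom C h \<Longrightarrow> Comp C h (add f g) = add (Comp C h f) (Comp C h g)"
  using preadditive_bilinear(2)[of "Dom C f" "Cod C f" "Cod C h" f g h] by (auto simp: hom_def)

lemma add_self_eq_imp_zr:
  assumes a: "a \<in> Ar C" and aa: "add a a = a"
  shows "a = zr (Dom C a) (Cod C a)"
proof -
  obtain n where n: "n \<in> Ar C" "Dom C n = Dom C a" "Cod C n = Cod C a"
    "add a n = zr (Dom C a) (Cod C a)"
    using add_inverse_exists[OF a] by blast
  have "zr (Dom C a) (Cod C a) = add (add a a) n" using aa n by simp
  also have "\<dots> = add a (add a n)" using add_assoc a n by simp
  also have "\<dots> = a" using n a by simp
  finally show ?thesis by simp
qed

lemma zr_comp [simp]:
  assumes f: "f \<in> Ar C" "Cod C f = Y" and Z: "Z \<in> Ob C"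
  shows "Comp C (zr Y Z) f = zr (Dom C f) Z"
proof -
  have Y: "Y \<in> Ob C" using f by auto
  let ?a = "Comp C (zr Y Z) f"
  have "?a = Comp C (add (zr Y Z) (zr Y Z)) f" using Y Z by simp
  also have "\<dots> = add ?a ?a" using comp_add_left[of f "zr Y Z" "zr Y Z"] f Y Z by simp
  finally show ?thesis using add_self_eq_imp_zr[of ?a] f Y Z by simp
qed

lemma comp_zr [simp]:
  assumes f: "f \<in> Ar C" "Dom C f = Y" and X: "X \<in> Ob C"
  shows "Comp C f (zr X Y) = zr X (Cod C f)"
proof -
  have Y: "Y \<in> Ob C" using f by auto
  let ?a = "Comp C f (zr X Y)"
  have "?a = Comp C f (add (zr X Y) (zr X Y))" using X Y by simp
  also have "\<dots> = add ?a ?a" using comp_add_right[of "zr X Y" "zr X Y" f] f X Y by simp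
  finally show ?thesis using add_self_eq_imp_zr[of ?a] f X Y by simp
qed

section \<open>Zero morphisms, kernels and cokernels\<close>

lemma zero_object_exists: obtains Z where "zero_object C Z"
  using abelian unfolding abelian_def by blast

lemma zero_mor_iff:
  assumes f: "f \<in> Ar C"
  shows "zero_mor C f \<longleftrightarrow> f = zr (Dom C f) (Cod C f)"
proof
  assume "zero_mor C f"
  then obtain Z a b where Z: "zero_object C Z" and a: "a \<in> hom C (Dom C f) Z"
    and b: "b \<in> hom C Z (Cod C f)" and fab: "f = Comp C b a"
    unfolding zero_mor_def by blast
  have ZO: "Z \<in> Ob C" using Z unfolding zero_object_def by blast
  have "\<exists>!g. g \<in> hom C (Dom C f) Z" using Z f unfolding zero_object_def by auto
  moreover have "zr (Dom C f) Z \<in> hom C (Dom C f) Z" using f ZO by (simp add: hom_def)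
  ultimately have "a = zr (Dom C f) Z" using a by blast
  then have "f = Comp C b (zr (Dom C f) Z)" using fab by simp
  also have "\<dots> = zr (Dom C f) (Cod C f)" using b f ZO by (simp add: hom_def)
  finally show "f = zr (Dom C f) (Cod C f)" .
next
  assume fz: "f = zr (Dom C f) (Cod C f)"
  obtain Z where Z: "zero_object C Z" using zero_object_exists by blast
  have ZO: "Z \<in> Ob C" using Z unfolding zero_object_def by blast
  have "Comp C (zr Z (Cod C f)) (zr (Dom C f) Z) = zr (Dom C f) (Cod C f)" using f ZO by simp
  then show "zero_mor C f" unfolding zero_mor_def using f Z ZO fz
    by (intro conjI exI[of _ Z] bexI[of _ "zr (Dom C f) Z"] bexI[of _ "zr Z (Cod C f)"])
      (auto simp: hom_def)
qed

lemma is_kernelD: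
  assumes "is_kernel C f k"
  shows "f \<in> Ar C" "k \<in> Ar C" "Cod C k = Dom C f" "Comp C f k = zr (Dom C k) (Cod C f)"
    "\<And>k'. k' \<in> Ar C \<Longrightarrow> Cod C k' = Dom C f \<Longrightarrow> Comp C f k' = zr (Dom C k') (Cod C f) \<Longrightarrow>
        \<exists>!u. u \<in> hom C (Dom C k') (Dom C k) \<and> Comp C k u = k'"
proof -
  have A: "f \<in> Ar C" "k \<in> Ar C" "Cod C k = Dom C f" "zero_mor C (Comp C f k)"
    and U: "\<forall>k'\<in>Ar C. Cod C k' = Dom C f \<longrightarrow> zero_mor C (Comp C f k') \<longrightarrow>
        (\<exists>!u. u \<in> hom C (Dom C k') (Dom C k) \<and> Comp C k u = k')"
    using assms unfolding is_kernel_def by blast+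
  show "f \<in> Ar C" "k \<in> Ar C" "Cod C k = Dom C f" using A by blast+
  show "Comp C f k = zr (Dom C k) (Cod C f)" using A zero_mor_iff[of "Comp C f k"] by simp
  fix k' assume "k' \<in> Ar C" "Cod C k' = Dom C f" "Comp C f k' = zr (Dom C k') (Cod C f)"
  then show "\<exists>!u. u \<in> hom C (Dom C k') (Dom C k) \<and> Comp C k u = k'"
    using A U zero_mor_iff[of "Comp C f k'"] by simp
qed

lemma is_cokernelD:
  assumes "is_cokernel C f d"
  shows "f \<in> Ar C" "d \<in> Ar C" "Dom C d = Cod C f" "Comp C d f = zr (Dom C f) (Cod C d)"
    "\<And>d'. d' \<in> Ar C \<Longrightarrow> Dom C d' = Cod C f \<Longrightarrow> Comp C d' f = zr (Dom C f) (Cod C d') \<Longrightarrow>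
        \<exists>!u. u \<in> hom C (Cod C d) (Cod C d') \<and> Comp C u d = d'"
proof -
  have A: "f \<in> Ar C" "d \<in> Ar C" "Dom C d = Cod C f" "zero_mor C (Comp C d f)"
    and U: "\<forall>d'\<in>Ar C. Dom C d' = Cod C f \<longrightarrow> zero_mor C (Comp C d' f) \<longrightarrow>
        (\<exists>!u. u \<in> hom C (Cod C d) (Cod C d') \<and> Comp C u d = d')"
    using assms unfolding is_cokernel_def by blast+
  show "f \<in> Ar C" "d \<in> Ar C" "Dom C d = Cod C f" using A by blast+
  show "Comp C d f = zr (Dom C f) (Cod C d)" using A zero_mor_iff[of "Comp C d f"] by simp
  fix d' assume "d' \<in> Ar C" "Dom C d' = Cod C f" "Comp C d' f = zr (Dom C f) (Cod C d')"
  then show "\<exists>!u. u \<in> hom C (Cod C d) (Cod C d') \<and> Comp C u d = d'"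
    using A U zero_mor_iff[of "Comp C d' f"] by simp
qed

lemma kernel_exists: "f \<in> Ar C \<Longrightarrow> \<exists>k. is_kernel C f k"
  and cokernel_exists: "f \<in> Ar C \<Longrightarrow> \<exists>d. is_cokernel C f d"
  and mono_is_kernel: "mono C m \<Longrightarrow> \<exists>f. is_kernel C f m"
  and epi_is_cokernel: "epi C e \<Longrightarrow> \<exists>f. is_cokernel C f e"
  using abelian unfolding abelian_def by blast+

lemma mono_cancel:
  assumes "mono C m" "a \<in> Ar C" "b \<in> Ar C" "Cod C a = Dom C m" "Cod C b = Dom C m"
    "Dom C a = Dom C b" "Comp C m a = Comp C m b"
  shows "a = b"
  using assms unfolding mono_def by blast

lemma epi_cancel:
  assumes "epi C e" "a \<in> Ar C" "b \<in> Ar C" "Dom C a = Cod C e" "Dom C b = Cod C e"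
    "Cod C a = Cod C b" "Comp C a e = Comp C b e"
  shows "a = b"
  using assms unfolding epi_def by blast

lemma section_mono:
  assumes "section_mor C s" shows "mono C s"
proof -
  obtain t where s: "s \<in> Ar C" and t: "t \<in> hom C (Cod C s) (Dom C s)"
    and ts: "Comp C t s = Id C (Dom C s)"
    using assms unfolding section_mor_def by blast
  show ?thesis unfolding mono_def
  proof (intro conjI ballI impI s)
    fix a b assume a: "a \<in> Ar C" "Cod C a = Dom C s" and b: "b \<in> Ar C" "Cod C b = Dom C s"
      and sab: "Comp C s a = Comp C s b"
    have "a = Comp C (Comp C t s) a" using ts a by simp
    also have "\<dots> = Comp C t (Comp C s b)" using comp_assoc[of a s t] sab a s t by (simp add: hom_def)
    also have "\<dots> = Comp C (Comp C t s) b" using comp_assoc[of b s t] b s t by (simp add: hom_def)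
    finally show "a = b" using ts b by simp
  qed
qed

lemma retraction_epi:
  assumes "retraction_mor C r" shows "epi C r"
proof -
  obtain t where r: "r \<in> Ar C" and t: "t \<in> hom C (Cod C r) (Dom C r)"
    and rt: "Comp C r t = Id C (Cod C r)"
    using assms unfolding retraction_mor_def by blast
  show ?thesis unfolding epi_def
  proof (intro conjI ballI impI r)
    fix a b assume a: "a \<in> Ar C" "Dom C a = Cod C r" and b: "b \<in> Ar C" "Dom C b = Cod C r"
      and abr: "Comp C a r = Comp C b r"
    have "a = Comp C a (Comp C r t)" using rt a by simp
    also have "\<dots> = Comp C (Comp C b r) t" using comp_assoc[of t r a] abr a r t by (simp add: hom_def)
    also have "\<dots> = Comp C b (Comp C r t)" using comp_assoc[of t r b] b r t by (simp add: hom_def)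
    finally show "a = b" using rt b by simp
  qed
qed

lemma mono_comp:
  assumes A: "mono C a" and B: "mono C b" and ab: "Cod C a = Dom C b"
  shows "mono C (Comp C b a)"
proof -
  have a: "a \<in> Ar C" and b: "b \<in> Ar C" using A B unfolding mono_def by blast+
  show ?thesis unfolding mono_def
  proof (intro conjI ballI impI)
    fix x y assume x: "x \<in> Ar C" "Cod C x = Dom C (Comp C b a)" and y: "y \<in> Ar C" "Cod C y = Dom C (Comp C b a)"
      and "Dom C x = Dom C y" and eq: "Comp C (Comp C b a) x = Comp C (Comp C b a) y"
    then have "Comp C a x = Comp C a y"
      using mono_cancel[OF B] comp_assoc[of x a b] comp_assoc[of y a b] a b ab by simp
    then show "x = y" using mono_cancel[OF A] x y \<open>Dom C x = Dom C y\<close> a b ab by simp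
  qed (use a b ab in simp)
qed

lemma epi_comp:
  assumes A: "epi C a" and B: "epi C b" and ab: "Cod C a = Dom C b"
  shows "epi C (Comp C b a)"
proof -
  have a: "a \<in> Ar C" and b: "b \<in> Ar C" using A B unfolding epi_def by blast+
  show ?thesis unfolding epi_def
  proof (intro conjI ballI impI)
    fix x y assume x: "x \<in> Ar C" "Dom C x = Cod C (Comp C b a)" and y: "y \<in> Ar C" "Dom C y = Cod C (Comp C b a)"
      and "Cod C x = Cod C y" and eq: "Comp C x (Comp C b a) = Comp C y (Comp C b a)"
    then have "Comp C x b = Comp C y b"
      using epi_cancel[OF A] comp_assoc[of a b x] comp_assoc[of a b y] a b ab by simp
    then show "x = y" using epi_cancel[OF B] x y \<open>Cod C x = Cod C y\<close> a b ab by simp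
  qed (use a b ab in simp)
qed

lemma kernel_mono:
  assumes K: "is_kernel C f k" shows "mono C k"
  unfolding mono_def
proof (intro conjI ballI impI)
  note kd = is_kernelD(1-4)[OF K] and ku = is_kernelD(5)[OF K]
  show "k \<in> Ar C" by (rule kd(2))
  fix a b assume a: "a \<in> Ar C" "Cod C a = Dom C k" and b: "b \<in> Ar C" "Cod C b = Dom C k"
    and ab: "Dom C a = Dom C b" and kab: "Comp C k a = Comp C k b"
  let ?k' = "Comp C k a"
  have "Comp C f ?k' = Comp C (Comp C f k) a" using comp_assoc[of a k f] a kd by simp
  also have "\<dots> = zr (Dom C ?k') (Cod C f)" using kd a by simp
  finally have "\<exists>!u. u \<in> hom C (Dom C ?k') (Dom C k) \<and> Comp C k u = ?k'"
    using ku[of ?k'] a kd by simp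
  then show "a = b" using a b ab kab kd by (auto simp: hom_def)
qed

lemma cokernel_epi:
  assumes K: "is_cokernel C f d" shows "epi C d"
  unfolding epi_def
proof (intro conjI ballI impI)
  note dd = is_cokernelD(1-4)[OF K] and du = is_cokernelD(5)[OF K]
  show "d \<in> Ar C" by (rule dd(2))
  fix a b assume a: "a \<in> Ar C" "Dom C a = Cod C d" and b: "b \<in> Ar C" "Dom C b = Cod C d"
    and ab: "Cod C a = Cod C b" and abd: "Comp C a d = Comp C b d"
  let ?d' = "Comp C a d"
  have "Comp C ?d' f = Comp C a (Comp C d f)" using comp_assoc[of f d a] a dd by simp
  also have "\<dots> = zr (Dom C f) (Cod C ?d')" using dd a by simp
  finally have "\<exists>!u. u \<in> hom C (Cod C d) (Cod C ?d') \<and> Comp C u d = ?d'"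
    using du[of ?d'] a dd by simp
  then show "a = b" using a b ab abd dd by (auto simp: hom_def)
qed

lemma kernel_of_cokernel:
  assumes K: "is_kernel C f m" and D: "is_cokernel C m c"
  shows "is_kernel C c m"
proof -
  note kd = is_kernelD(1-4)[OF K] and ku = is_kernelD(5)[OF K]
    and cd = is_cokernelD(1-4)[OF D] and cu = is_cokernelD(5)[OF D]
  obtain w where w: "w \<in> hom C (Cod C c) (Cod C f)" "Comp C w c = f"
    using cu[of f] kd by auto
  have w': "w \<in> Ar C" "Dom C w = Cod C c" "Cod C w = Cod C f" using w(1) by (auto simp: hom_def)
  show ?thesis unfolding is_kernel_def
  proof (intro conjI ballI impI)
    show "c \<in> Ar C" "m \<in> Ar C" "Cod C m = Dom C c" using cd kd by auto
    show "zero_mor C (Comp C c m)" using cd kd zero_mor_iff[of "Comp C c m"] by simp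
    fix k' assume k': "k' \<in> Ar C" "Cod C k' = Dom C c" "zero_mor C (Comp C c k')"
    then have ck: "Comp C c k' = zr (Dom C k') (Cod C c)"
      using cd zero_mor_iff[of "Comp C c k'"] by simp
    have "Comp C f k' = Comp C w (Comp C c k')" using comp_assoc[of k' c w] k' w' cd w(2) by simp
    also have "\<dots> = zr (Dom C k') (Cod C f)" using ck w' k' by simp
    finally show "\<exists>!u. u \<in> hom C (Dom C k') (Dom C m) \<and> Comp C m u = k'"
      using ku[OF k'(1)] k' cd kd by simp
  qed
qed

lemma cokernel_of_kernel:
  assumes D: "is_cokernel C f e" and K: "is_kernel C e k"
  shows "is_cokernel C k e"
proof -
  note dd = is_cokernelD(1-4)[OF D] and du = is_cokernelD(5)[OF D]
    and kd = is_kernelD(1-4)[OF K] and ku = is_kernelD(5)[OF K]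
  obtain w where w: "w \<in> hom C (Dom C f) (Dom C k)" "Comp C k w = f"
    using ku[of f] dd by auto
  have w': "w \<in> Ar C" "Dom C w = Dom C f" "Cod C w = Dom C k" using w(1) by (auto simp: hom_def)
  show ?thesis unfolding is_cokernel_def
  proof (intro conjI ballI impI)
    show "k \<in> Ar C" "e \<in> Ar C" "Dom C e = Cod C k" using dd kd by auto
    show "zero_mor C (Comp C e k)" using dd kd zero_mor_iff[of "Comp C e k"] by simp
    fix d' assume d': "d' \<in> Ar C" "Dom C d' = Cod C k" "zero_mor C (Comp C d' k)"
    then have dk: "Comp C d' k = zr (Dom C k) (Cod C d')"
      using kd zero_mor_iff[of "Comp C d' k"] by simp
    have "Comp C d' f = Comp C (Comp C d' k) w" using comp_assoc[of w k d'] d' w' kd w(2) by simp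
    also have "\<dots> = zr (Dom C f) (Cod C d')" using dk w' d' by simp
    finally show "\<exists>!u. u \<in> hom C (Cod C e) (Cod C d') \<and> Comp C u e = d'"
      using du[OF d'(1)] d' dd kd by simp
  qed
qed

lemma kernel_of_retraction_is_section:
  assumes K: "is_kernel C g f" and R: "retraction_mor C g"
  shows "section_mor C f"
proof -
  note kd = is_kernelD(1-4)[OF K] and ku = is_kernelD(5)[OF K]
  define A B Q where "A = Dom C f" and "B = Dom C g" and "Q = Cod C g"
  have Ob: "A \<in> Ob C" "B \<in> Ob C" "Q \<in> Ob C" unfolding A_def B_def Q_def using kd by auto
  have f: "f \<in> Ar C" "Dom C f = A" "Cod C f = B" and g: "g \<in> Ar C" "Dom C g = B" "Cod C g = Q"
    using kd unfolding A_def B_def Q_def by auto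
  obtain t where t: "t \<in> Ar C" "Dom C t = Q" "Cod C t = B" and gt: "Comp C g t = Id C Q"
    using R g unfolding retraction_mor_def hom_def by auto
  let ?tg = "Comp C t g"
  have tg: "?tg \<in> Ar C" "Dom C ?tg = B" "Cod C ?tg = B" using t g by auto
  obtain n where n: "n \<in> Ar C" "Dom C n = B" "Cod C n = B" "add ?tg n = zr B B"
    using add_inverse_exists[OF tg(1)] tg by metis
  \<comment> \<open>The idempotent \<open>1 - t g\<close> kills \<open>g\<close> from the left and fixes \<open>f\<close>.\<close>
  let ?\<phi> = "add (Id C B) n"
  have \<phi>: "?\<phi> \<in> Ar C" "Dom C ?\<phi> = B" "Cod C ?\<phi> = B" using n Ob by auto
  have "zr B Q = Comp C g (add ?tg n)" using n g Ob by simp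
  also have "\<dots> = add (Comp C (Comp C g t) g) (Comp C g n)"
    using comp_add_right[of ?tg n g] comp_assoc[of g t g] n g t by simp
  finally have "add g (Comp C g n) = zr B Q" using gt g by simp
  then have "Comp C g ?\<phi> = zr (Dom C ?\<phi>) (Cod C g)"
    using comp_add_right[of "Id C B" n g] n g \<phi> Ob by simp
  then obtain s where s: "s \<in> hom C B A" "Comp C f s = ?\<phi>"
    using ku[OF \<phi>(1)] \<phi> g f by auto
  have s': "s \<in> Ar C" "Dom C s = B" "Cod C s = A" using s(1) by (auto simp: hom_def)
  have "Comp C ?tg f = Comp C t (Comp C g f)" using comp_assoc[of f g t] f g t by simp
  also have "\<dots> = zr A B" using kd f g t Ob by simp
  finally have tgf: "Comp C ?tg f = zr A B" .
  have "zr A B = Comp C (add ?tg n) f" using n f Ob by simp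
  also have "\<dots> = Comp C n f" using comp_add_left[of f ?tg n] tgf n f tg Ob by simp
  finally have nf: "Comp C n f = zr A B" by simp
  have "Comp C f (Comp C s f) = Comp C (Comp C f s) f" using comp_assoc[of f s f] f s' by simp
  also have "\<dots> = f" using s(2) comp_add_left[of f "Id C B" n] nf n f Ob by simp
  finally have "Comp C s f = Id C A"
    using mono_cancel[OF kernel_mono[OF K], of "Comp C s f" "Id C A"] f s' Ob by simp
  then show ?thesis unfolding section_mor_def using f s' by (auto simp: hom_def)
qed

lemma cokernel_of_section_is_retraction:
  assumes D: "is_cokernel C k e" and S: "section_mor C k"
  shows "retraction_mor C e"
proof -
  note dd = is_cokernelD(1-4)[OF D] and du = is_cokernelD(5)[OF D]
  define A B Q where "A = Dom C k" and "B = Dom C e" and "Q = Cod C e"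
  have Ob: "A \<in> Ob C" "B \<in> Ob C" "Q \<in> Ob C" unfolding A_def B_def Q_def using dd by auto
  have k: "k \<in> Ar C" "Dom C k = A" "Cod C k = B" and e: "e \<in> Ar C" "Dom C e = B" "Cod C e = Q"
    using dd unfolding A_def B_def Q_def by auto
  obtain s where s: "s \<in> Ar C" "Dom C s = B" "Cod C s = A" and sk: "Comp C s k = Id C A"
    using S k unfolding section_mor_def hom_def by auto
  let ?ks = "Comp C k s"
  have ks: "?ks \<in> Ar C" "Dom C ?ks = B" "Cod C ?ks = B" using k s by auto
  obtain n where n: "n \<in> Ar C" "Dom C n = B" "Cod C n = B" "add ?ks n = zr B B"
    using add_inverse_exists[OF ks(1)] ks by metis
  \<comment> \<open>The idempotent \<open>1 - k s\<close> kills \<open>k\<close> from the right and is fixed by \<open>e\<close>.\<close>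
  let ?\<phi> = "add (Id C B) n"
  have \<phi>: "?\<phi> \<in> Ar C" "Dom C ?\<phi> = B" "Cod C ?\<phi> = B" using n Ob by auto
  have "zr A B = Comp C (add ?ks n) k" using n k Ob by simp
  also have "\<dots> = add (Comp C k (Comp C s k)) (Comp C n k)"
    using comp_add_left[of k ?ks n] comp_assoc[of k s k] n k s by simp
  finally have "add k (Comp C n k) = zr A B" using sk k by simp
  then have "Comp C ?\<phi> k = zr (Dom C k) (Cod C ?\<phi>)"
    using comp_add_left[of k "Id C B" n] n k \<phi> Ob by simp
  then obtain t where t: "t \<in> hom C Q B" "Comp C t e = ?\<phi>"
    using du[OF \<phi>(1)] \<phi> k e by auto
  have t': "t \<in> Ar C" "Dom C t = Q" "Cod C t = B" using t(1) by (auto simp: hom_def)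
  have "Comp C e ?ks = Comp C (Comp C e k) s" using comp_assoc[of s k e] k e s by simp
  also have "\<dots> = zr B Q" using dd k e s Ob by simp
  finally have eks: "Comp C e ?ks = zr B Q" .
  have "zr B Q = Comp C e (add ?ks n)" using n e Ob by simp
  also have "\<dots> = Comp C e n" using comp_add_right[of ?ks n e] eks n e ks Ob by simp
  finally have en: "Comp C e n = zr B Q" by simp
  have "Comp C (Comp C e t) e = Comp C e (Comp C t e)" using comp_assoc[of e t e] e t' by simp
  also have "\<dots> = e" using t(2) comp_add_right[of "Id C B" n e] en n e Ob by simp
  finally have "Comp C e t = Id C Q"
    using epi_cancel[OF cokernel_epi[OF D], of "Comp C e t" "Id C Q"] e t' Ob by simp
  then show ?thesis unfolding retraction_mor_def using e t' by (auto simp: hom_def)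
qed

lemma spectral_mono_section:
  assumes S: "spectral C" and M: "mono C m"
  shows "section_mor C m"
proof -
  obtain f where K: "is_kernel C f m" using mono_is_kernel[OF M] by blast
  obtain c where D: "is_cokernel C m c" using cokernel_exists M unfolding mono_def by blast
  have "short_exact C m c" unfolding short_exact_def
    using M cokernel_epi[OF D] is_cokernelD(3)[OF D] kernel_of_cokernel[OF K D] by simp
  then show ?thesis using S unfolding spectral_def by blast
qed

lemma spectral_epi_retraction:
  assumes S: "spectral C" and E: "epi C e"
  shows "retraction_mor C e"
proof -
  obtain f where D: "is_cokernel C f e" using epi_is_cokernel[OF E] by blast
  obtain k where K: "is_kernel C e k" using kernel_exists E unfolding epi_def by blast
  have "short_exact C k e" unfolding short_exact_def
    using E kernel_mono[OF K] is_kernelD(3)[OF K] K by simp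
  then have "section_mor C k" using S unfolding spectral_def by blast
  then show ?thesis using cokernel_of_section_is_retraction[OF cokernel_of_kernel[OF D K]] by blast
qed

lemma spectral_injective:
  assumes S: "spectral C" and X: "X \<in> Ob C"
  shows "injective_obj C X"
  unfolding injective_obj_def
proof (intro conjI allI impI X)
  fix m f assume M: "mono C m" and f: "f \<in> hom C (Dom C m) X"
  obtain r where r: "r \<in> Ar C" "Dom C r = Cod C m" "Cod C r = Dom C m"
    and rm: "Comp C r m = Id C (Dom C m)"
    using spectral_mono_section[OF S M] unfolding section_mor_def hom_def by blast
  have m: "m \<in> Ar C" using M unfolding mono_def by blast
  have f': "f \<in> Ar C" "Dom C f = Dom C m" "Cod C f = X" using f by (auto simp: hom_def)
  have "Comp C (Comp C f r) m = f" using comp_assoc[of m r f] rm m r f' by simp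
  then show "\<exists>h\<in>hom C (Cod C m) X. Comp C h m = f"
    using r f' m by (intro bexI[of _ "Comp C f r"]) (auto simp: hom_def)
qed

lemma spectral_projective:
  assumes S: "spectral C" and X: "X \<in> Ob C"
  shows "projective_obj C X"
  unfolding projective_obj_def
proof (intro conjI allI impI X)
  fix e f assume E: "epi C e" and f: "f \<in> hom C X (Cod C e)"
  obtain r where r: "r \<in> Ar C" "Dom C r = Cod C e" "Cod C r = Dom C e"
    and er: "Comp C e r = Id C (Cod C e)"
    using spectral_epi_retraction[OF S E] unfolding retraction_mor_def hom_def by blast
  have e: "e \<in> Ar C" using E unfolding epi_def by blast
  have f': "f \<in> Ar C" "Dom C f = X" "Cod C f = Cod C e" using f by (auto simp: hom_def)
  have "Comp C e (Comp C r f) = f" using comp_assoc[of f r e] er e r f' by simp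
  then show "\<exists>h\<in>hom C X (Dom C e). Comp C e h = f"
    using r f' e by (intro bexI[of _ "Comp C r f"]) (auto simp: hom_def)
qed

section \<open>Retracts and biproducts\<close>

lemma retract_of_trans:
  assumes "retract_of C X Y" "retract_of C Y Z"
  shows "retract_of C X Z"
proof -
  obtain s r where s: "s \<in> Ar C" "Dom C s = X" "Cod C s = Y" and r: "r \<in> Ar C" "Dom C r = Y" "Cod C r = X"
    and rs: "Comp C r s = Id C X"
    using assms(1) unfolding retract_of_def hom_def by blast
  obtain s' r' where s': "s' \<in> Ar C" "Dom C s' = Y" "Cod C s' = Z"
    and r': "r' \<in> Ar C" "Dom C r' = Z" "Cod C r' = Y" and rs': "Comp C r' s' = Id C Y"
    using assms(2) unfolding retract_of_def hom_def by blast
  have "Comp C (Comp C r r') (Comp C s' s) = Comp C r (Comp C (Comp C r' s') s)"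
    using comp_assoc[of "Comp C s' s" r' r] comp_assoc[of s s' r'] s r s' r' by simp
  also have "\<dots> = Id C X" using rs rs' s by simp
  finally show ?thesis unfolding retract_of_def
    using s r s' r' by (intro bexI[of _ "Comp C s' s"] bexI[of _ "Comp C r r'"]) (auto simp: hom_def)
qed

lemma section_retract_of: "section_mor C s \<Longrightarrow> retract_of C (Dom C s) (Cod C s)"
  unfolding section_mor_def retract_of_def hom_def by blast

lemma retraction_retract_of: "retraction_mor C r \<Longrightarrow> retract_of C (Cod C r) (Dom C r)"
  unfolding retraction_mor_def retract_of_def hom_def by blast

lemma injective_retract:
  assumes I: "injective_obj C Y" and R: "retract_of C X Y"
  shows "injective_obj C X"
proof -
  obtain s r where s: "s \<in> Ar C" "Dom C s = X" "Cod C s = Y" and r: "r \<in> Ar C" "Dom C r = Y" "Cod C r = X"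
    and rs: "Comp C r s = Id C X"
    using R unfolding retract_of_def hom_def by blast
  show ?thesis unfolding injective_obj_def
  proof (intro conjI allI impI)
    show "X \<in> Ob C" using s by auto
    fix m h assume M: "mono C m" and h: "h \<in> hom C (Dom C m) X"
    have h': "h \<in> Ar C" "Dom C h = Dom C m" "Cod C h = X" using h by (auto simp: hom_def)
    have "Comp C s h \<in> hom C (Dom C m) Y" using h' s by (auto simp: hom_def)
    then obtain g where g: "g \<in> Ar C" "Dom C g = Cod C m" "Cod C g = Y" and gm: "Comp C g m = Comp C s h"
      using I M unfolding injective_obj_def hom_def by blast
    have m: "m \<in> Ar C" using M unfolding mono_def by blast
    have "Comp C (Comp C r g) m = Comp C (Comp C r s) h"
      using comp_assoc[of m g r] comp_assoc[of h s r] gm m g r s h' by simp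
    then show "\<exists>g'\<in>hom C (Cod C m) X. Comp C g' m = h"
      using rs g r h' by (intro bexI[of _ "Comp C r g"]) (auto simp: hom_def)
  qed
qed

lemma projective_retract:
  assumes P: "projective_obj C Y" and R: "retract_of C X Y"
  shows "projective_obj C X"
proof -
  obtain s r where s: "s \<in> Ar C" "Dom C s = X" "Cod C s = Y" and r: "r \<in> Ar C" "Dom C r = Y" "Cod C r = X"
    and rs: "Comp C r s = Id C X"
    using R unfolding retract_of_def hom_def by blast
  show ?thesis unfolding projective_obj_def
  proof (intro conjI allI impI)
    show "X \<in> Ob C" using s by auto
    fix e h assume E: "epi C e" and h: "h \<in> hom C X (Cod C e)"
    have h': "h \<in> Ar C" "Dom C h = X" "Cod C h = Cod C e" using h by (auto simp: hom_def)
    have "Comp C h r \<in> hom C Y (Cod C e)" using h' r by (auto simp: hom_def)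
    then obtain g where g: "g \<in> Ar C" "Dom C g = Y" "Cod C g = Dom C e" and eg: "Comp C e g = Comp C h r"
      using P E unfolding projective_obj_def hom_def by blast
    have e: "e \<in> Ar C" using E unfolding epi_def by blast
    have "Comp C e (Comp C g s) = Comp C h (Comp C r s)"
      using comp_assoc[of s g e] comp_assoc[of s r h] eg e g r s h' by simp
    then show "\<exists>g'\<in>hom C X (Dom C e). Comp C e g' = h"
      using rs g s h' by (intro bexI[of _ "Comp C g s"]) (auto simp: hom_def)
  qed
qed

lemma product_exists: "A \<in> Ob C \<Longrightarrow> B \<in> Ob C \<Longrightarrow> \<exists>P p1 p2. is_product C A B P p1 p2"
  using abelian unfolding abelian_def by blast

lemma productD:
  assumes "is_product C A B P p1 p2"
  shows "p1 \<in> Ar C" "Dom C p1 = P" "Cod C p1 = A" "p2 \<in> Ar C" "Dom C p2 = P" "Cod C p2 = B"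
  using assms unfolding is_product_def hom_def by auto

lemma product_lift:
  assumes Pr: "is_product C A B P p1 p2" and "a \<in> Ar C" "b \<in> Ar C"
    "Dom C a = Y" "Dom C b = Y" "Cod C a = A" "Cod C b = B"
  obtains w where "w \<in> Ar C" "Dom C w = Y" "Cod C w = P" "Comp C p1 w = a" "Comp C p2 w = b"
proof -
  have "Y \<in> Ob C" using assms by auto
  then have "\<exists>!u. u \<in> hom C Y P \<and> Comp C p1 u = a \<and> Comp C p2 u = b"
    using Pr assms unfolding is_product_def by (simp add: hom_def)
  then show ?thesis using that by (auto simp: hom_def)
qed

lemma product_eqI:
  assumes Pr: "is_product C A B P p1 p2" and "w \<in> Ar C" "w' \<in> Ar C"
    "Dom C w = Y" "Dom C w' = Y" "Cod C w = P" "Cod C w' = P"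
    "Comp C p1 w = Comp C p1 w'" "Comp C p2 w = Comp C p2 w'"
  shows "w = w'"
proof -
  note pd = productD[OF Pr]
  have "Y \<in> Ob C" "Comp C p1 w \<in> hom C Y A" "Comp C p2 w \<in> hom C Y B"
    using assms pd by (auto simp: hom_def)
  then have "\<exists>!u. u \<in> hom C Y P \<and> Comp C p1 u = Comp C p1 w \<and> Comp C p2 u = Comp C p2 w"
    using Pr unfolding is_product_def by blast
  then show ?thesis using assms by (auto simp: hom_def)
qed

text \<open>In a preadditive category a binary product is a biproduct.\<close>

lemma product_injections:
  assumes Pr: "is_product C A B P p1 p2"
  obtains q1 q2 where
    "q1 \<in> Ar C" "Dom C q1 = A" "Cod C q1 = P" "q2 \<in> Ar C" "Dom C q2 = B" "Cod C q2 = P"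
    "Comp C p1 q1 = Id C A" "Comp C p2 q1 = zr A B" "Comp C p1 q2 = zr B A" "Comp C p2 q2 = Id C B"
    "add (Comp C q1 p1) (Comp C q2 p2) = Id C P"
proof -
  note pd = productD[OF Pr]
  have Ob: "A \<in> Ob C" "B \<in> Ob C" "P \<in> Ob C" using pd by (metis Cod_in_Ob Dom_in_Ob)+
  obtain q1 where q1: "q1 \<in> Ar C" "Dom C q1 = A" "Cod C q1 = P"
    "Comp C p1 q1 = Id C A" "Comp C p2 q1 = zr A B"
    using product_lift[OF Pr, of "Id C A" "zr A B" A] Ob by auto
  obtain q2 where q2: "q2 \<in> Ar C" "Dom C q2 = B" "Cod C q2 = P"
    "Comp C p1 q2 = zr B A" "Comp C p2 q2 = Id C B"
    using product_lift[OF Pr, of "zr B A" "Id C B" B] Ob by auto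
  let ?S = "add (Comp C q1 p1) (Comp C q2 p2)"
  have S: "?S \<in> Ar C" "Dom C ?S = P" "Cod C ?S = P" using q1 q2 pd by auto
  have "Comp C p1 ?S = add (Comp C (Comp C p1 q1) p1) (Comp C (Comp C p1 q2) p2)"
    using comp_add_right[of "Comp C q1 p1" "Comp C q2 p2" p1]
      comp_assoc[of p1 q1 p1] comp_assoc[of p2 q2 p1] q1 q2 pd by simp
  also have "\<dots> = Comp C p1 (Id C P)" using q1 q2 pd Ob by simp
  finally have S1: "Comp C p1 ?S = Comp C p1 (Id C P)" .
  have "Comp C p2 ?S = add (Comp C (Comp C p2 q1) p1) (Comp C (Comp C p2 q2) p2)"
    using comp_add_right[of "Comp C q1 p1" "Comp C q2 p2" p2]
      comp_assoc[of p1 q1 p2] comp_assoc[of p2 q2 p2] q1 q2 pd by simp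
  also have "\<dots> = Comp C p2 (Id C P)" using q1 q2 pd Ob by simp
  finally have S2: "Comp C p2 ?S = Comp C p2 (Id C P)" .
  have "?S = Id C P" using product_eqI[OF Pr _ _ _ _ _ _ S1 S2] S Ob by simp
  then show ?thesis using that q1 q2 by blast
qed

lemma injective_product:
  assumes Pr: "is_product C A B P p1 p2" and IA: "injective_obj C A" and IB: "injective_obj C B"
  shows "injective_obj C P"
  unfolding injective_obj_def
proof (intro conjI allI impI)
  note pd = productD[OF Pr]
  show "P \<in> Ob C" using pd by (metis Dom_in_Ob)
  fix m h assume M: "mono C m" and h: "h \<in> hom C (Dom C m) P"
  have m: "m \<in> Ar C" using M unfolding mono_def by blast
  have h': "h \<in> Ar C" "Dom C h = Dom C m" "Cod C h = P" using h by (auto simp: hom_def)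
  have "Comp C p1 h \<in> hom C (Dom C m) A" "Comp C p2 h \<in> hom C (Dom C m) B"
    using h' pd by (auto simp: hom_def)
  then obtain h1 h2 where "h1 \<in> hom C (Cod C m) A" "Comp C h1 m = Comp C p1 h"
    and "h2 \<in> hom C (Cod C m) B" "Comp C h2 m = Comp C p2 h"
    using IA IB M unfolding injective_obj_def by meson
  then have h1: "h1 \<in> Ar C" "Dom C h1 = Cod C m" "Cod C h1 = A" "Comp C h1 m = Comp C p1 h"
    and h2: "h2 \<in> Ar C" "Dom C h2 = Cod C m" "Cod C h2 = B" "Comp C h2 m = Comp C p2 h"
    by (auto simp: hom_def)
  obtain w where w: "w \<in> Ar C" "Dom C w = Cod C m" "Cod C w = P" "Comp C p1 w = h1" "Comp C p2 w = h2"
    using product_lift[OF Pr h1(1) h2(1)] h1 h2 by metis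
  have "Comp C p1 (Comp C w m) = Comp C p1 h" "Comp C p2 (Comp C w m) = Comp C p2 h"
    using comp_assoc[of m w p1] comp_assoc[of m w p2] w m pd h1 h2 by simp_all
  then have "Comp C w m = h" using product_eqI[OF Pr] w m h' by simp
  then show "\<exists>g\<in>hom C (Cod C m) P. Comp C g m = h" using w by (auto simp: hom_def)
qed

lemma projective_product:
  assumes Pr: "is_product C A B P p1 p2" and PA: "projective_obj C A" and PB: "projective_obj C B"
  shows "projective_obj C P"
  unfolding projective_obj_def
proof (intro conjI allI impI)
  note pd = productD[OF Pr]
  obtain q1 q2 where q: "q1 \<in> Ar C" "Dom C q1 = A" "Cod C q1 = P" "q2 \<in> Ar C" "Dom C q2 = B" "Cod C q2 = P"
    and S: "add (Comp C q1 p1) (Comp C q2 p2) = Id C P"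
    using product_injections[OF Pr] by metis
  show "P \<in> Ob C" using pd by (metis Dom_in_Ob)
  fix e h assume E: "epi C e" and h: "h \<in> hom C P (Cod C e)"
  have e: "e \<in> Ar C" using E unfolding epi_def by blast
  have h': "h \<in> Ar C" "Dom C h = P" "Cod C h = Cod C e" using h by (auto simp: hom_def)
  have "Comp C h q1 \<in> hom C A (Cod C e)" "Comp C h q2 \<in> hom C B (Cod C e)"
    using h' q by (auto simp: hom_def)
  then obtain h1 h2 where "h1 \<in> hom C A (Dom C e)" "Comp C e h1 = Comp C h q1"
    and "h2 \<in> hom C B (Dom C e)" "Comp C e h2 = Comp C h q2"
    using PA PB E unfolding projective_obj_def by meson
  then have h1: "h1 \<in> Ar C" "Dom C h1 = A" "Cod C h1 = Dom C e" "Comp C e h1 = Comp C h q1"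
    and h2: "h2 \<in> Ar C" "Dom C h2 = B" "Cod C h2 = Dom C e" "Comp C e h2 = Comp C h q2"
    by (auto simp: hom_def)
  let ?w = "add (Comp C h1 p1) (Comp C h2 p2)"
  have w: "?w \<in> Ar C" "Dom C ?w = P" "Cod C ?w = Dom C e" using h1 h2 pd by auto
  have "Comp C e ?w = add (Comp C (Comp C e h1) p1) (Comp C (Comp C e h2) p2)"
    using comp_add_right[of "Comp C h1 p1" "Comp C h2 p2" e]
      comp_assoc[of p1 h1 e] comp_assoc[of p2 h2 e] e h1 h2 pd by simp
  also have "\<dots> = Comp C h (add (Comp C q1 p1) (Comp C q2 p2))"
    using comp_add_right[of "Comp C q1 p1" "Comp C q2 p2" h]
      comp_assoc[of p1 q1 h] comp_assoc[of p2 q2 h] h1 h2 h' q pd by simp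
  also have "\<dots> = h" using S h' by simp
  finally show "\<exists>g\<in>hom C P (Dom C e). Comp C e g = h" using w by (auto simp: hom_def)
qed

section \<open>Splitting kernels of endomorphisms\<close>

lemma mono_comp_eq_zr_iff:
  assumes M: "mono C m" and a: "a \<in> Ar C" "Cod C a = Dom C m"
  shows "Comp C m a = zr (Dom C a) (Cod C m) \<longleftrightarrow> a = zr (Dom C a) (Dom C m)"
proof -
  have m: "m \<in> Ar C" using M unfolding mono_def by blast
  have mz: "Comp C m (zr (Dom C a) (Dom C m)) = zr (Dom C a) (Cod C m)" using m a by simp
  show ?thesis
  proof
    assume "Comp C m a = zr (Dom C a) (Cod C m)"
    then show "a = zr (Dom C a) (Dom C m)"
      using mono_cancel[OF M, of a "zr (Dom C a) (Dom C m)"] mz m a by simp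
  qed (use mz in metis)
qed

lemma epi_comp_eq_zr_iff:
  assumes E: "epi C e" and a: "a \<in> Ar C" "Dom C a = Cod C e"
  shows "Comp C a e = zr (Dom C e) (Cod C a) \<longleftrightarrow> a = zr (Cod C e) (Cod C a)"
proof -
  have e: "e \<in> Ar C" using E unfolding epi_def by blast
  have ze: "Comp C (zr (Cod C e) (Cod C a)) e = zr (Dom C e) (Cod C a)" using e a by simp
  show ?thesis
  proof
    assume "Comp C a e = zr (Dom C e) (Cod C a)"
    then show "a = zr (Cod C e) (Cod C a)"
      using epi_cancel[OF E, of a "zr (Cod C e) (Cod C a)"] ze e a by simp
  qed (use ze in metis)
qed

lemma is_kernel_mono_comp_iff:
  assumes M: "mono C m" and h: "h \<in> Ar C" "Cod C h = Dom C m"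
  shows "is_kernel C (Comp C m h) k \<longleftrightarrow> is_kernel C h k"
proof -
  have m: "m \<in> Ar C" using M unfolding mono_def by blast
  have "zero_mor C (Comp C (Comp C m h) a) \<longleftrightarrow> zero_mor C (Comp C h a)"
    if a: "a \<in> Ar C" "Cod C a = Dom C h" for a
    using zero_mor_iff mono_comp_eq_zr_iff[OF M, of "Comp C h a"] comp_assoc[of a h m] a h m
    by simp
  then show ?thesis unfolding is_kernel_def using h m by auto
qed

lemma is_cokernel_comp_epi_iff:
  assumes E: "epi C e" and f: "f \<in> Ar C" "Dom C f = Cod C e"
  shows "is_cokernel C (Comp C f e) c \<longleftrightarrow> is_cokernel C f c"
proof -
  have e: "e \<in> Ar C" using E unfolding epi_def by blast
  have "zero_mor C (Comp C a (Comp C f e)) \<longleftrightarrow> zero_mor C (Comp C a f)"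
    if a: "a \<in> Ar C" "Dom C a = Cod C f" for a
    using zero_mor_iff epi_comp_eq_zr_iff[OF E, of "Comp C a f"] comp_assoc[of e f a] a f e
    by simp
  then show ?thesis unfolding is_cokernel_def using f e by auto
qed

lemma retract_of_kernel_comp_retraction:
  assumes U: "is_kernel C f u" and K: "is_kernel C (Comp C f p) k"
    and p: "p \<in> Ar C" "Cod C p = Dom C f" and q: "q \<in> Ar C" "Dom C q = Dom C f" "Cod C q = Dom C p"
    and pq: "Comp C p q = Id C (Dom C f)"
  shows "retract_of C (Dom C u) (Dom C k)"
proof -
  note ud = is_kernelD(1-4)[OF U] and uu = is_kernelD(5)[OF U]
    and kd = is_kernelD(1-4)[OF K] and ku = is_kernelD(5)[OF K]
  define j where "j = Comp C q u"
  have j: "j \<in> Ar C" "Dom C j = Dom C u" "Cod C j = Dom C p" unfolding j_def using q ud by auto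
  have pj: "Comp C p j = u" unfolding j_def using comp_assoc[of u q p] pq p q ud by simp
  have "Comp C (Comp C f p) j = Comp C f u" using comp_assoc[of j p f] pj j p ud by simp
  then obtain w where w: "w \<in> Ar C" "Dom C w = Dom C u" "Cod C w = Dom C k" and kw: "Comp C k w = j"
    using ku[OF j(1)] j ud p by (auto simp: hom_def)
  have "Comp C f (Comp C p k) = zr (Dom C (Comp C p k)) (Cod C f)"
    using kd comp_assoc[of k p f] p ud by simp
  then obtain t where t: "t \<in> Ar C" "Dom C t = Dom C k" "Cod C t = Dom C u" and ut: "Comp C u t = Comp C p k"
    using uu[of "Comp C p k"] kd p ud by (auto simp: hom_def)
  have "Comp C u (Comp C t w) = Comp C u (Id C (Dom C u))"
    using comp_assoc[of w t u] comp_assoc[of w k p] ut kw pj w t kd p ud by simp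
  then have "Comp C t w = Id C (Dom C u)"
    using mono_cancel[OF kernel_mono[OF U]] w t ud by simp
  then show ?thesis unfolding retract_of_def using w t by (auto simp: hom_def)
qed

lemma retract_of_cokernel_comp_section:
  assumes E: "is_cokernel C f e" and D: "is_cokernel C (Comp C q f) c"
    and q: "q \<in> Ar C" "Dom C q = Cod C f" and p: "p \<in> Ar C" "Dom C p = Cod C q" "Cod C p = Cod C f"
    and pq: "Comp C p q = Id C (Cod C f)"
  shows "retract_of C (Cod C e) (Cod C c)"
proof -
  note ed = is_cokernelD(1-4)[OF E] and eu = is_cokernelD(5)[OF E]
    and cd = is_cokernelD(1-4)[OF D] and cu = is_cokernelD(5)[OF D]
  define j where "j = Comp C e p"
  have j: "j \<in> Ar C" "Dom C j = Cod C q" "Cod C j = Cod C e" unfolding j_def using p ed by auto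
  have jq: "Comp C j q = e" unfolding j_def using comp_assoc[of q p e] pq p q ed by simp
  have "Comp C j (Comp C q f) = Comp C e f" using comp_assoc[of f q j] jq j q ed by simp
  then obtain w where w: "w \<in> Ar C" "Dom C w = Cod C c" "Cod C w = Cod C e" and wc: "Comp C w c = j"
    using cu[OF j(1)] j ed q by (auto simp: hom_def)
  have "Comp C (Comp C c q) f = zr (Dom C f) (Cod C (Comp C c q))"
    using cd comp_assoc[of f q c] q ed by simp
  then obtain t where t: "t \<in> Ar C" "Dom C t = Cod C e" "Cod C t = Cod C c" and te: "Comp C t e = Comp C c q"
    using eu[of "Comp C c q"] cd q ed by (auto simp: hom_def)
  have "Comp C (Comp C w t) e = Comp C (Id C (Cod C e)) e"
    using comp_assoc[of e t w] comp_assoc[of q c w] te wc jq w t cd q ed by simp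
  then have "Comp C w t = Id C (Cod C e)"
    using epi_cancel[OF cokernel_epi[OF E]] w t ed by simp
  then show ?thesis unfolding retract_of_def using w t by (auto simp: hom_def)
qed

lemma fully_invariant_zero:
  assumes Z: "zero_object C Z" and N: "N \<in> Ob C"
  shows "fully_invariant C N (zr Z N)"
  unfolding fully_invariant_def
proof (intro conjI ballI)
  have ZO: "Z \<in> Ob C" using Z unfolding zero_object_def by blast
  show "mono C (zr Z N)" unfolding mono_def
  proof (intro conjI ballI impI)
    fix a b assume "a \<in> Ar C" "b \<in> Ar C" "Cod C a = Dom C (zr Z N)" "Cod C b = Dom C (zr Z N)"
      "Dom C a = Dom C b"
    moreover have "\<exists>!x. x \<in> hom C (Dom C a) Z" using Z \<open>a \<in> Ar C\<close> unfolding zero_object_def by simp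
    ultimately show "a = b" using ZO N by (auto simp: hom_def)
  qed (use ZO N in simp)
  show "Cod C (zr Z N) = N" using ZO N by simp
  fix h assume "h \<in> hom C N N"
  then have "Comp C h (zr Z N) = Comp C (zr Z N) (Id C Z)" using ZO N by (simp add: hom_def)
  then show "\<exists>\<alpha>\<in>hom C (Dom C (zr Z N)) (Dom C (zr Z N)). Comp C h (zr Z N) = Comp C (zr Z N) \<alpha>"
    using ZO N by (intro bexI[of _ "Id C Z"]) (auto simp: hom_def)
qed

lemma fully_invariant_Id:
  assumes N: "N \<in> Ob C" shows "fully_invariant C N (Id C N)"
  unfolding fully_invariant_def
proof (intro conjI ballI)
  show "mono C (Id C N)" using N unfolding mono_def by auto
  show "Cod C (Id C N) = N" using N by simp
  fix h assume "h \<in> hom C N N"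
  then show "\<exists>\<alpha>\<in>hom C (Dom C (Id C N)) (Dom C (Id C N)). Comp C h (Id C N) = Comp C (Id C N) \<alpha>"
    using N by (intro bexI[of _ h]) (auto simp: hom_def)
qed

lemma self_split_zero_kernel_section:
  assumes Z: "zero_object C Z" and S: "MF_split C N N (zr Z N)"
    and g: "g \<in> hom C N N" and K: "is_kernel C g k"
  shows "section_mor C k"
proof -
  have g': "g \<in> Ar C" "Dom C g = N" "Cod C g = N" using g by (auto simp: hom_def)
  have Ob: "Z \<in> Ob C" "N \<in> Ob C" using Z g' unfolding zero_object_def by auto
  obtain d where D: "is_cokernel C (zr Z N) d" using cokernel_exists[of "zr Z N"] Ob by auto
  note dd = is_cokernelD(1-4)[OF D] and du = is_cokernelD(5)[OF D]
  \<comment> \<open>Since \<open>F = 0\<close>, the quotient map \<open>d\<close> has a left inverse, so \<open>ker (d g) = ker g\<close>.\<close>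
  obtain t where t: "t \<in> hom C (Cod C d) N" "Comp C t d = Id C N"
    using du[of "Id C N"] Ob by auto
  have "Dom C d = N" using dd Ob by simp
  then have "section_mor C d" unfolding section_mor_def using t dd(2) by blast
  then have "is_kernel C (Comp C d g) k"
    using is_kernel_mono_comp_iff[OF section_mono] K g' \<open>Dom C d = N\<close> by simp
  then show ?thesis using S g D unfolding MF_split_def by blast
qed

lemma dual_self_split_Id_cokernel_retraction:
  assumes S: "dual_MF_split C N N (Id C N)" and g: "g \<in> hom C N N" and D: "is_cokernel C g c"
  shows "retraction_mor C c"
proof -
  have "Comp C g (Id C N) = g" using g by (simp add: hom_def)
  then show ?thesis using S g D unfolding dual_MF_split_def by metis
qed

lemma injective_if_endomorphism_kernels_split:
  assumes EI: "enough_injectives C"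
    and H: "\<And>N g k. injective_obj C N \<Longrightarrow> g \<in> hom C N N \<Longrightarrow> is_kernel C g k \<Longrightarrow> section_mor C k"
    and X: "X \<in> Ob C"
  shows "injective_obj C X"
proof -
  obtain E u where IE: "injective_obj C E" and U: "mono C u" and u: "u \<in> hom C X E"
    using EI X unfolding enough_injectives_def by blast
  obtain f where F: "is_kernel C f u" using mono_is_kernel[OF U] by blast
  note fd = is_kernelD(1-3)[OF F]
  have E: "E \<in> Ob C" and Dom_f: "Dom C f = E" using IE u fd unfolding injective_obj_def hom_def by auto
  obtain E' v where IE': "injective_obj C E'" and V: "mono C v" and v: "v \<in> hom C (Cod C f) E'"
    using EI fd unfolding enough_injectives_def by fastforce
  have E': "E' \<in> Ob C" using IE' unfolding injective_obj_def by blast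
  obtain P p1 p2 where Pr: "is_product C E E' P p1 p2" using product_exists E E' by blast
  note pd = productD[OF Pr]
  obtain q1 q2 where q: "q1 \<in> Ar C" "Dom C q1 = E" "Cod C q1 = P" "q2 \<in> Ar C" "Dom C q2 = E'" "Cod C q2 = P"
    and pq: "Comp C p1 q1 = Id C E" "Comp C p2 q2 = Id C E'"
    using product_injections[OF Pr] by metis
  \<comment> \<open>The endomorphism \<open>(x, y) \<mapsto> (0, v (f x))\<close> of \<open>E \<times> E'\<close> has kernel \<open>ker f \<times> E'\<close>.\<close>
  define m where "m = Comp C q2 v"
  have "section_mor C q2" unfolding section_mor_def using q pq pd by (auto simp: hom_def)
  then have M: "mono C m" unfolding m_def using mono_comp[OF V section_mono] v q by (simp add: hom_def)
  have m: "m \<in> Ar C" "Dom C m = Cod C f" "Cod C m = P" unfolding m_def using v q by (auto simp: hom_def)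
  define g where "g = Comp C m (Comp C f p1)"
  have g: "g \<in> hom C P P" unfolding g_def using m fd pd Dom_f by (simp add: hom_def)
  obtain k where K: "is_kernel C g k" using kernel_exists g by (auto simp: hom_def)
  have "is_kernel C (Comp C f p1) k"
    using K is_kernel_mono_comp_iff[OF M] fd pd m Dom_f unfolding g_def by simp
  then have "retract_of C X (Dom C k)"
    using retract_of_kernel_comp_retraction[OF F _ pd(1) _ q(1)] u fd pd q pq Dom_f
    by (simp add: hom_def)
  moreover have "retract_of C (Dom C k) P"
    using section_retract_of[OF H[OF injective_product[OF Pr IE IE'] g K]] is_kernelD(3)[OF K] g
    by (simp add: hom_def)
  ultimately show ?thesis
    using injective_retract[OF injective_product[OF Pr IE IE']] retract_of_trans by blast
qed

lemma projective_if_endomorphism_cokernels_split: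
  assumes EP: "enough_projectives C"
    and H: "\<And>N g c. projective_obj C N \<Longrightarrow> g \<in> hom C N N \<Longrightarrow> is_cokernel C g c \<Longrightarrow> retraction_mor C c"
    and X: "X \<in> Ob C"
  shows "projective_obj C X"
proof -
  obtain E e where PE: "projective_obj C E" and Ep: "epi C e" and e: "e \<in> hom C E X"
    using EP X unfolding enough_projectives_def by blast
  obtain f where F: "is_cokernel C f e" using epi_is_cokernel[OF Ep] by blast
  note fd = is_cokernelD(1-3)[OF F]
  have E: "E \<in> Ob C" and Cod_f: "Cod C f = E" using PE e fd unfolding projective_obj_def hom_def by auto
  obtain E' v where PE': "projective_obj C E'" and V: "epi C v" and v: "v \<in> hom C E' (Dom C f)"
    using EP fd unfolding enough_projectives_def by fastforce
  have E': "E' \<in> Ob C" using PE' unfolding projective_obj_def by blast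
  obtain P p1 p2 where Pr: "is_product C E E' P p1 p2" using product_exists E E' by blast
  note pd = productD[OF Pr]
  obtain q1 q2 where q: "q1 \<in> Ar C" "Dom C q1 = E" "Cod C q1 = P" "q2 \<in> Ar C" "Dom C q2 = E'" "Cod C q2 = P"
    and pq: "Comp C p1 q1 = Id C E" "Comp C p2 q2 = Id C E'"
    using product_injections[OF Pr] by metis
  \<comment> \<open>The endomorphism \<open>(x, y) \<mapsto> (f (v y), 0)\<close> of \<open>E \<times> E'\<close> has cokernel \<open>coker f \<times> E'\<close>.\<close>
  define r where "r = Comp C v p2"
  have "retraction_mor C p2" unfolding retraction_mor_def using q pq pd by (auto simp: hom_def)
  then have R: "epi C r" unfolding r_def using epi_comp[OF retraction_epi V] v pd by (simp add: hom_def)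
  have r: "r \<in> Ar C" "Dom C r = P" "Cod C r = Dom C f" unfolding r_def using v pd by (auto simp: hom_def)
  define g where "g = Comp C (Comp C q1 f) r"
  have g: "g \<in> hom C P P" unfolding g_def using r fd q Cod_f by (simp add: hom_def)
  obtain c where D: "is_cokernel C g c" using cokernel_exists g by (auto simp: hom_def)
  have "is_cokernel C (Comp C q1 f) c"
    using D is_cokernel_comp_epi_iff[OF R] fd q r Cod_f unfolding g_def by simp
  then have "retract_of C X (Cod C c)"
    using retract_of_cokernel_comp_section[OF F _ q(1) _ pd(1)] e fd pd q pq Cod_f
    by (simp add: hom_def)
  moreover have "retract_of C (Cod C c) P"
    using retraction_retract_of[OF H[OF projective_product[OF Pr PE PE'] g D]] is_cokernelD(3)[OF D] g
    by (simp add: hom_def)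
  ultimately show ?thesis
    using projective_retract[OF projective_product[OF Pr PE PE']] retract_of_trans by blast
qed

lemma spectral_if_all_injective:
  assumes I: "\<And>X. X \<in> Ob C \<Longrightarrow> injective_obj C X"
  shows "spectral C"
  unfolding spectral_def
proof (intro allI impI)
  fix f g assume "short_exact C f g"
  then have M: "mono C f" unfolding short_exact_def by blast
  then have f: "f \<in> Ar C" unfolding mono_def by blast
  have "Id C (Dom C f) \<in> hom C (Dom C f) (Dom C f)" "injective_obj C (Dom C f)"
    using f I by (simp_all add: hom_def)
  then obtain h where "h \<in> hom C (Cod C f) (Dom C f)" "Comp C h f = Id C (Dom C f)"
    using M unfolding injective_obj_def by blast
  then show "section_mor C f" unfolding section_mor_def using f by blast
qed

lemma spectral_if_all_projective:
  assumes P: "\<And>X. X \<in> Ob C \<Longrightarrow> projective_obj C X"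
  shows "spectral C"
  unfolding spectral_def
proof (intro allI impI)
  fix f g assume "short_exact C f g"
  then have Ep: "epi C g" and K: "is_kernel C g f" unfolding short_exact_def by blast+
  then have g: "g \<in> Ar C" unfolding epi_def by blast
  have "Id C (Cod C g) \<in> hom C (Cod C g) (Cod C g)" "projective_obj C (Cod C g)"
    using g P by (simp_all add: hom_def)
  then obtain t where "t \<in> hom C (Cod C g) (Dom C g)" "Comp C g t = Id C (Cod C g)"
    using Ep unfolding projective_obj_def by blast
  then have "retraction_mor C g" unfolding retraction_mor_def using g by blast
  then show "section_mor C f" by (rule kernel_of_retraction_is_section[OF K])
qed

lemma spectral_if_injectives_self_split:
  assumes EI: "enough_injectives C"
    and S: "\<forall>N\<in>Ob C. injective_obj C N \<longrightarrow> (\<forall>i. fully_invariant C N i \<longrightarrow> MF_split C N N i)"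
  shows "spectral C"
proof -
  obtain Z where Z: "zero_object C Z" using zero_object_exists by blast
  have H: "section_mor C k" if I: "injective_obj C N" and "g \<in> hom C N N" "is_kernel C g k" for N g k
  proof -
    have "N \<in> Ob C" using I unfolding injective_obj_def by blast
    then show ?thesis
      using self_split_zero_kernel_section[OF Z] S fully_invariant_zero[OF Z] that by blast
  qed
  show ?thesis by (rule spectral_if_all_injective[OF injective_if_endomorphism_kernels_split[OF EI H]])
qed

lemma spectral_if_projectives_dual_self_split:
  assumes EP: "enough_projectives C"
    and S: "\<forall>N\<in>Ob C. projective_obj C N \<longrightarrow> (\<forall>i. fully_invariant C N i \<longrightarrow> dual_MF_split C N N i)"
  shows "spectral C"
proof -
  have H: "retraction_mor C c" if P: "projective_obj C N" and "g \<in> hom C N N" "is_cokernel C g c" for N g c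
  proof -
    have "N \<in> Ob C" using P unfolding projective_obj_def by blast
    then show ?thesis
      using dual_self_split_Id_cokernel_retraction S fully_invariant_Id that by blast
  qed
  show ?thesis
    by (rule spectral_if_all_projective[OF projective_if_endomorphism_cokernels_split[OF EP H]])
qed

lemma spectral_imp_splitting_conditions:
  assumes S: "spectral C"
  shows "enough_injectives C" "enough_projectives C" "MF_split C M N i" "dual_MF_split C M N i"
proof -
  have "Id C X \<in> hom C X X" "mono C (Id C X)" "epi C (Id C X)" if "X \<in> Ob C" for X
    using that unfolding mono_def epi_def hom_def by auto
  then show "enough_injectives C" "enough_projectives C"
    unfolding enough_injectives_def enough_projectives_def
    using spectral_injective[OF S] spectral_projective[OF S] by blast+
  show "MF_split C M N i" unfolding MF_split_def
    using spectral_mono_section[OF S] kernel_mono by blast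
  show "dual_MF_split C M N i" unfolding dual_MF_split_def
    using spectral_epi_retraction[OF S] cokernel_epi by blast
qed

end

theorem theorem6p1:
  fixes C :: "('o,'m) cat"
  assumes "abelian C"
  shows
   "(spectral C \<longleftrightarrow>
       enough_injectives C \<and>
       (\<forall>M\<in>Ob C. \<forall>N\<in>Ob C. \<forall>i. fully_invariant C N i \<longrightarrow> MF_split C M N i)) \<and>
    (spectral C \<longleftrightarrow>
       enough_injectives C \<and>
       (\<forall>N\<in>Ob C. \<forall>i. fully_invariant C N i \<longrightarrow> MF_split C N N i)) \<and>
    (spectral C \<longleftrightarrow>
       enough_injectives C \<and>
       (\<forall>M\<in>Ob C. \<forall>N\<in>Ob C. injective_obj C N \<longrightarrow>
          (\<forall>i. fully_invariant C N i \<longrightarrow> MF_split C M N i))) \<and>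
    (spectral C \<longleftrightarrow>
       enough_injectives C \<and>
       (\<forall>N\<in>Ob C. injective_obj C N \<longrightarrow>
          (\<forall>i. fully_invariant C N i \<longrightarrow> MF_split C N N i))) \<and>
    (spectral C \<longleftrightarrow>
       enough_projectives C \<and>
       (\<forall>M\<in>Ob C. \<forall>N\<in>Ob C. \<forall>i. fully_invariant C N i \<longrightarrow> dual_MF_split C M N i)) \<and>
    (spectral C \<longleftrightarrow>
       enough_projectives C \<and>
       (\<forall>N\<in>Ob C. \<forall>i. fully_invariant C N i \<longrightarrow> dual_MF_split C N N i)) \<and>
    (spectral C \<longleftrightarrow>
       enough_projectives C \<and>
       (\<forall>M\<in>Ob C. \<forall>N\<in>Ob C. projective_obj C M \<longrightarrow>
          (\<forall>i. fully_invariant C N i \<longrightarrow> dual_MF_split C M N i))) \<and>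
    (spectral C \<longleftrightarrow>
       enough_projectives C \<and>
       (\<forall>N\<in>Ob C. projective_obj C N \<longrightarrow>
          (\<forall>i. fully_invariant C N i \<longrightarrow> dual_MF_split C N N i)))"
proof -
  obtain add zr where "preadditive C add zr" using assms unfolding abelian_def by blast
  then interpret abelian_category C add zr using assms by unfold_locales
  note spectral_if_injectives_self_split spectral_if_projectives_dual_self_split
    spectral_imp_splitting_conditions
  then show ?thesis by (intro conjI iffI) blast+
qed

end
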